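(* With the construction below, for every $n\ge n_0$ and every $y\in M$ with $0<d(\bar x,y)<\dfrac{\rho_n}{n(n+1)}$, we have $\overline d(x_n,y)>\rho_n$.
   Context: Let $(M,d)$ be a metric space, $\bar x\in M$, and $(x_n)_{n\ge1}$ a sequence of distinct points of $M\setminus\{\bar x\}$ with $d(x_n,\bar x)\to0$. Set $\rho_n=\frac{n}{n+1}d(x_n,\bar x)$ and assume $(\rho_n)_{n\ge1}$ is strictly decreasing. Fix $0<c<1$ and an integer $n_0\ge1$ with $c(n_0+1)<n_0$. Define $\theta(x,y)=\rho_n$ if $\{x,y\}=\{x_n,\bar x\}$ for some $n\ge n_0$, and $\theta(x,y)=d(x,y)$ otherwise. Define $\overline d(x,y)=\inf\sum_{i=0}^{N-1}\theta(a_i,a_{i+1})$, the infimum over all $N\ge1$ and all chains $a_0=x,a_1,\dots,a_N=y$ in $M$. *)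

theory Defs
  imports "HOL-Analysis.Analysis"
begin

definition rho :: "(nat \<Rightarrow> 'a::metric_space) \<Rightarrow> 'a \<Rightarrow> nat \<Rightarrow> real" where
  "rho x xbar n = real n / (real n + 1) * dist (x n) xbar"

definition theta :: "(nat \<Rightarrow> 'a::metric_space) \<Rightarrow> 'a \<Rightarrow> nat \<Rightarrow> 'a \<Rightarrow> 'a \<Rightarrow> real" where
  "theta x xbar n0 p q =
     (if \<exists>n\<ge>n0. {p, q} = {x n, xbar}
      then rho x xbar (SOME n. n \<ge> n0 \<and> {p, q} = {x n, xbar})
      else dist p q)"

definition dbar :: "(nat \<Rightarrow> 'a::metric_space) \<Rightarrow> 'a \<Rightarrow> nat \<Rightarrow> 'a \<Rightarrow> 'a \<Rightarrow> real" where
  "dbar x xbar n0 p q =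
     Inf {(\<Sum>i<N. theta x xbar n0 (a i) (a (Suc i))) | N a.
            N \<ge> 1 \<and> a 0 = p \<and> a N = q}"

end

theory Submission
  imports Defs
begin

(* Fix n \<ge> n0, put D = d(x_n, xbar) and \<delta> = d(xbar, y), so that
   \<rho>_n = n/(n+1) D and \<delta> < D/(n+1)^2.  Every chain from x_n to y falls into one of
   two cases.
   (1) It uses a shortcut edge {x_m, xbar} with n0 \<le> m \<le> n.  That edge costs
       \<rho>_m \<ge> \<rho>_n, and since every edge costs at least half its length, the two
       remaining pieces of the chain (from x_n to the edge and from the edge to y)
       cost at least min(D, \<delta>)/2 > 0.
   (2) It uses no such shortcut.  Then every edge costs at least (n+1)/(n+2) times
       its length, so the chain costs at least (n+1)/(n+2) (D - \<delta>), which exceeds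
       \<rho>_n because \<delta> < D/(n+1)^2.
   The file first proves the local estimate of theta by a scaled distance, then the
   resulting estimate for chains, the two cases above, and finally takes the
   infimum over all chains. *)

lemma theta_cases:
  "theta x xbar n0 p q = dist p q \<or>
   (\<exists>m\<ge>n0. {p,q} = {x m, xbar} \<and> theta x xbar n0 p q = rho x xbar m)"
proof (cases "\<exists>n\<ge>n0. {p, q} = {x n, xbar}")
  case True
  let ?m = "SOME n. n \<ge> n0 \<and> {p, q} = {x n, xbar}"
  have "?m \<ge> n0 \<and> {p, q} = {x ?m, xbar}" using someI_ex[OF True] by simp
  moreover have "theta x xbar n0 p q = rho x xbar ?m" using True by (simp add: theta_def)
  ultimately show ?thesis by blast
next
  case False
  then have "theta x xbar n0 p q = dist p q" unfolding theta_def by (rule if_not_P)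
  then show ?thesis by blast
qed

text \<open>Since the points x_m are distinct and differ from xbar, the shortcut edge
  {x_m, xbar} determines m, so its cost is exactly \<rho>_m.\<close>
lemma theta_shortcut:
  assumes inj: "inj_on x {1..}" and ne: "\<And>n. n \<ge> 1 \<Longrightarrow> x n \<noteq> xbar"
    and n0: "n0 \<ge> 1" and m: "n0 \<le> m" and pq: "{p,q} = {x m, xbar}"
  shows "theta x xbar n0 p q = rho x xbar m"
proof -
  have ex: "\<exists>n\<ge>n0. {p, q} = {x n, xbar}" using m pq by blast
  let ?m = "SOME n. n \<ge> n0 \<and> {p, q} = {x n, xbar}"
  have m': "?m \<ge> n0" "{x ?m, xbar} = {x m, xbar}" using someI_ex[OF ex] pq by auto
  have "x ?m = x m" using m'(2) ne[of ?m] m' n0 by (auto simp: doubleton_eq_iff)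
  then have "?m = m" using inj m m' n0 by (auto simp: inj_on_def)
  then show ?thesis using ex by (simp add: theta_def)
qed

text \<open>If every shortcut through the edge {p,q} has index at least k, the edge costs at
  least k/(k+1) times its length (since m/(m+1) increases in m).\<close>
lemma theta_ge_scaled_dist:
  assumes "\<And>m. n0 \<le> m \<Longrightarrow> {p,q} = {x m, xbar} \<Longrightarrow> k \<le> m"
  shows "real k / (real k + 1) * dist p q \<le> theta x xbar n0 p q"
  using theta_cases[of x xbar n0 p q]
proof
  assume "theta x xbar n0 p q = dist p q"
  moreover have "real k / (real k + 1) * dist p q \<le> 1 * dist p q"
    by (intro mult_right_mono) auto
  ultimately show ?thesis by simp
next
  assume "\<exists>m\<ge>n0. {p,q} = {x m, xbar} \<and> theta x xbar n0 p q = rho x xbar m"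
  then obtain m where m: "m \<ge> n0" "{p,q} = {x m, xbar}" "theta x xbar n0 p q = rho x xbar m"
    by auto
  have "dist p q = dist (x m) xbar"
    using m(2) by (auto simp: doubleton_eq_iff dist_commute)
  moreover have "real k / (real k + 1) \<le> real m / (real m + 1)"
    using assms[OF m(1,2)] by (simp add: field_simps)
  then have "real k / (real k + 1) * dist (x m) xbar \<le> real m / (real m + 1) * dist (x m) xbar"
    by (rule mult_right_mono) simp
  ultimately show ?thesis
    using m(3) by (simp add: rho_def)
qed

lemma theta_ge_half_dist:
  assumes "n0 \<ge> 1"
  shows "dist p q / 2 \<le> theta x xbar n0 p q"
  using theta_ge_scaled_dist[of n0 p q x xbar 1] assms by simp

lemma chain_ge_scaled_dist:
  fixes a :: "nat \<Rightarrow> 'a::metric_space"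
  assumes "k \<le> l" and s: "0 \<le> s"
    and step: "\<And>i. k \<le> i \<Longrightarrow> i < l \<Longrightarrow> s * dist (a i) (a (Suc i)) \<le> f i"
  shows "s * dist (a k) (a l) \<le> (\<Sum>i\<in>{k..<l}. f i)"
  using assms(1)
proof (induction l rule: dec_induct)
  case base
  then show ?case by simp
next
  case (step l)
  have "s * dist (a k) (a (Suc l)) \<le> s * dist (a k) (a l) + s * dist (a l) (a (Suc l))"
    using s dist_triangle[of "a k" "a (Suc l)" "a l"] by (simp add: mult_left_mono distrib_left[symmetric])
  also have "\<dots> \<le> (\<Sum>i\<in>{k..<l}. f i) + f l"
    using step.IH assms(3)[of l] step.hyps by simp
  finally show ?case using step.hyps by simp
qed

lemma dbar_ge:
  assumes "\<And>N a. N \<ge> 1 \<Longrightarrow> a 0 = p \<Longrightarrow> a N = q \<Longrightarrow>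
                 L \<le> (\<Sum>i<N. theta x xbar n0 (a i) (a (Suc i)))"
  shows "L \<le> dbar x xbar n0 p q"
  unfolding dbar_def
proof (rule cInf_greatest)
  let ?a = "\<lambda>i::nat. if i = 0 then p else q"
  show "{(\<Sum>i<N. theta x xbar n0 (a i) (a (Suc i))) | N a. N \<ge> 1 \<and> a 0 = p \<and> a N = q} \<noteq> {}"
    by (rule ex_in_conv[THEN iffD1], rule exI[of _ "\<Sum>i<1. theta x xbar n0 (?a i) (?a (Suc i))"]) fastforce
qed (use assms in blast)

lemma chain_through_shortcut:
  assumes n0: "n0 \<ge> 1" and j: "j < N"
    and edge: "{a j, a (Suc j)} = {x m, xbar}"
    and cost: "theta x xbar n0 (a j) (a (Suc j)) = rho x xbar m"
  shows "rho x xbar m + min (dist (a 0) xbar) (dist xbar (a N)) / 2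
           \<le> (\<Sum>i<N. theta x xbar n0 (a i) (a (Suc i)))"
proof -
  let ?t = "\<lambda>i. theta x xbar n0 (a i) (a (Suc i))"
  have "(\<Sum>i<N. ?t i) = (\<Sum>i\<in>{0..<j}. ?t i) + (\<Sum>i\<in>{j..<N}. ?t i)"
    using j by (simp add: atLeast0LessThan[symmetric] sum.atLeastLessThan_concat)
  also have "(\<Sum>i\<in>{j..<N}. ?t i) = ?t j + (\<Sum>i\<in>{Suc j..<N}. ?t i)"
    using j by (simp add: sum.atLeast_Suc_lessThan)
  finally have split: "(\<Sum>i<N. ?t i) = (\<Sum>i\<in>{0..<j}. ?t i) + ?t j + (\<Sum>i\<in>{Suc j..<N}. ?t i)"
    by simp
  have half: "1/2 * dist (a i) (a (Suc i)) \<le> ?t i" for i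
    using theta_ge_half_dist[OF n0] by simp
  have before: "1/2 * dist (a 0) (a j) \<le> (\<Sum>i\<in>{0..<j}. ?t i)"
    by (rule chain_ge_scaled_dist) (simp, simp, rule half)
  have after: "1/2 * dist (a (Suc j)) (a N) \<le> (\<Sum>i\<in>{Suc j..<N}. ?t i)"
    by (rule chain_ge_scaled_dist) (use j in simp, simp, rule half)
  have "a j = xbar \<or> a (Suc j) = xbar" using edge by (auto simp: doubleton_eq_iff)
  then have "min (dist (a 0) xbar) (dist xbar (a N)) \<le> dist (a 0) (a j) + dist (a (Suc j)) (a N)"
    by (elim disjE) (simp_all add: min_le_iff_disj)
  then show ?thesis using split before after cost by linarith
qed

lemma chain_avoiding_shortcuts:
  assumes avoid: "\<And>i m. i < N \<Longrightarrow> n0 \<le> m \<Longrightarrow> {a i, a (Suc i)} = {x m, xbar} \<Longrightarrow> n < m"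
  shows "(real n + 1) / (real n + 2) * dist (a 0) (a N)
           \<le> (\<Sum>i<N. theta x xbar n0 (a i) (a (Suc i)))"
proof -
  have "real (Suc n) / (real (Suc n) + 1) * dist (a i) (a (Suc i))
          \<le> theta x xbar n0 (a i) (a (Suc i))" if "i < N" for i
    by (rule theta_ge_scaled_dist) (use avoid that in fastforce)
  then show ?thesis
    using chain_ge_scaled_dist[of 0 N "(real n + 1) / (real n + 2)" a
        "\<lambda>i. theta x xbar n0 (a i) (a (Suc i))"]
    by (simp add: atLeast0LessThan add.commute)
qed

lemma rho_antimono:
  assumes decr: "\<And>n. n \<ge> 1 \<Longrightarrow> rho x xbar (Suc n) < rho x xbar n"
    and "1 \<le> m" "m \<le> n"
  shows "rho x xbar n \<le> rho x xbar m"
  using assms(3)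
proof (induction n rule: dec_induct)
  case (step k)
  then show ?case using decr[of k] assms(2) by simp
qed simp

lemma scaled_gap_gt:
  fixes D \<delta> :: real
  assumes "\<delta> < D / (real n + 1)^2"
  shows "real n / (real n + 1) * D < (real n + 1) / (real n + 2) * (D - \<delta>)"
proof -
  have "(real n + 1)^2 \<noteq> 0" "real n + 2 \<noteq> 0" by auto
  then have "real n / (real n + 1) * D = (real n + 1) / (real n + 2) * (D - D / (real n + 1)^2)"
    by (simp add: divide_simps power2_eq_square) (simp add: algebra_simps)
  also have "\<dots> < (real n + 1) / (real n + 2) * (D - \<delta>)"
    using assms by (intro mult_strict_left_mono) auto
  finally show ?thesis .
qed

lemma chain_from_x_n_cost:
  assumes distinct: "inj_on x {1..}" and ne: "\<And>n. n \<ge> 1 \<Longrightarrow> x n \<noteq> xbar"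
    and decr: "\<And>n. n \<ge> 1 \<Longrightarrow> rho x xbar (Suc n) < rho x xbar n"
    and n0: "n0 \<ge> 1" and n: "n0 \<le> n" and a0: "a 0 = x n" and aN: "a N = y"
  shows "min (rho x xbar n + min (dist (x n) xbar) (dist xbar y) / 2)
             ((real n + 1) / (real n + 2) * (dist (x n) xbar - dist xbar y))
           \<le> (\<Sum>i<N. theta x xbar n0 (a i) (a (Suc i)))"
proof (cases "\<exists>j<N. \<exists>m. n0 \<le> m \<and> m \<le> n \<and> {a j, a (Suc j)} = {x m, xbar}")
  case True
  then obtain j m where j: "j < N" and m: "n0 \<le> m" "m \<le> n"
    and edge: "{a j, a (Suc j)} = {x m, xbar}" by blast
  have "rho x xbar n \<le> rho x xbar m"
    using rho_antimono[OF decr, of m n] m n0 by simp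
  moreover have "rho x xbar m + min (dist (x n) xbar) (dist xbar y) / 2
                   \<le> (\<Sum>i<N. theta x xbar n0 (a i) (a (Suc i)))"
    using chain_through_shortcut[OF n0 j edge theta_shortcut[OF distinct ne n0 m(1) edge]]
    by (simp add: a0 aN)
  ultimately show ?thesis by simp
next
  case False
  have "dist (x n) xbar - dist xbar y \<le> dist (a 0) (a N)"
    using a0 aN dist_triangle[of "x n" xbar y] by (simp add: dist_commute)
  then have "(real n + 1) / (real n + 2) * (dist (x n) xbar - dist xbar y)
               \<le> (real n + 1) / (real n + 2) * dist (a 0) (a N)"
    by (rule mult_left_mono) simp
  also have "\<dots> \<le> (\<Sum>i<N. theta x xbar n0 (a i) (a (Suc i)))"
    by (rule chain_avoiding_shortcuts) (use False not_le in blast)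
  finally show ?thesis by simp
qed

theorem lemma7p3:
  fixes x :: "nat \<Rightarrow> 'a::metric_space" and xbar :: 'a and c :: real and n0 :: nat
  assumes distinct: "inj_on x {1..}"
    and ne: "\<And>n. n \<ge> 1 \<Longrightarrow> x n \<noteq> xbar"
    and lim: "(\<lambda>n. dist (x n) xbar) \<longlonglongrightarrow> 0"
    and decr: "\<And>n. n \<ge> 1 \<Longrightarrow> rho x xbar (Suc n) < rho x xbar n"
    and c: "0 < c" "c < 1"
    and n0: "n0 \<ge> 1" "c * (real n0 + 1) < real n0"
  shows "\<forall>n \<ge> n0. \<forall>y. 0 < dist xbar y \<and> dist xbar y < rho x xbar n / (real n * (real n + 1))
            \<longrightarrow> dbar x xbar n0 (x n) y > rho x xbar n"
proof (intro allI impI)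
  fix n y
  assume n: "n \<ge> n0" and y: "0 < dist xbar y \<and> dist xbar y < rho x xbar n / (real n * (real n + 1))"
  define D where "D = dist (x n) xbar"
  have D: "D > 0" using ne[of n] n n0 by (simp add: D_def)
  have rho_n: "rho x xbar n = real n / (real n + 1) * D" by (simp add: rho_def D_def)
  have y_close: "dist xbar y < D / (real n + 1)^2"
    using y n n0 by (simp add: rho_n power2_eq_square)
  have "rho x xbar n < min (rho x xbar n + min D (dist xbar y) / 2)
                           ((real n + 1) / (real n + 2) * (D - dist xbar y))"
    using D y scaled_gap_gt[OF y_close] by (simp add: rho_n)
  also have "\<dots> \<le> dbar x xbar n0 (x n) y"
    using chain_from_x_n_cost[OF distinct ne decr n0(1) n] by (intro dbar_ge) (simp add: D_def)
  finally show "dbar x xbar n0 (x n) y > rho x xbar n" .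
qed

end
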